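(* Let $X^{(n)}=\{X_1,\dots,X_n\}\subset\mathbb{R}^d$ and $u^{(n)}=\{u_1,\dots,u_n\}\subset\mathbb{R}^d$. Fix $i\in\{1,\dots,n\}$ and $\ell\in\{1,\dots,n\}$, let $v_{u_i}\in\arg\min_{v\in\mathcal{S}^{d-1}}\frac1n\sum_{j=1}^n\mathbf{1}(\langle v,u_j-u_i\rangle\geq0)$, and for $k\in\mathbb{N}$ let $X_k^{(n,\ell)}=\{X_1,\dots,X_{n-\ell},v_1^{(k)},\dots,v_\ell^{(k)}\}$ with $\{v_1^{(k)},\dots,v_\ell^{(k)}\}\subset kv_{u_i}+\mathbb{B}$. If $\mathrm{TD}(u_i;u^{(n)})<\ell/n$, then $$\lim_{k\to\infty}\|\hat T_{X_k^{(n,\ell)}}(u_i)\|=\infty.$$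
   Context: $\mathbb{B}=\{x:\|x\|\leq1\}$. For a set $Z^{(n)}$ of $n$ points, $\hat T_{Z^{(n)}}$ denotes any bijection $T:u^{(n)}\to Z^{(n)}$ minimizing $\frac1n\sum_{j}\|T(u_j)-u_j\|^2$. $\mathrm{TD}(u;u^{(n)})=\min_{v\in\mathcal{S}^{d-1}}\frac1n\sum_j\mathbf{1}(\langle v,u_j-u\rangle\geq0)$. *)

theory Defs
  imports "HOL-Analysis.Analysis" "HOL-Combinatorics.Permutations"
begin

text \<open>Point clouds of n points are indexed families on {..<n} (0-based indices).\<close>

definition tukey_frac :: "nat \<Rightarrow> (nat \<Rightarrow> 'a::euclidean_space) \<Rightarrow> 'a \<Rightarrow> 'a \<Rightarrow> real" where
  "tukey_frac n us u v = real (card {j\<in>{..<n}. v \<bullet> (us j - u) \<ge> 0}) / real n"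

definition tukey_depth :: "nat \<Rightarrow> (nat \<Rightarrow> 'a::euclidean_space) \<Rightarrow> 'a \<Rightarrow> real" where
  "tukey_depth n us u = Inf (tukey_frac n us u ` sphere 0 1)"

definition assign_cost :: "nat \<Rightarrow> (nat \<Rightarrow> 'a::euclidean_space) \<Rightarrow> (nat \<Rightarrow> 'a) \<Rightarrow> (nat \<Rightarrow> nat) \<Rightarrow> real" where
  "assign_cost n us Z \<sigma> = (\<Sum>j<n. (norm (Z (\<sigma> j) - us j))\<^sup>2) / real n"

text \<open>sigma encodes an optimal bijection T : u^(n) \<rightarrow> Z^(n), T(u_j) = Z_{sigma j}.\<close>
definition optimal_assignment :: "nat \<Rightarrow> (nat \<Rightarrow> 'a::euclidean_space) \<Rightarrow> (nat \<Rightarrow> 'a) \<Rightarrow> (nat \<Rightarrow> nat) \<Rightarrow> bool" where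
  "optimal_assignment n us Z \<sigma> \<longleftrightarrow> \<sigma> permutes {..<n} \<and>
     (\<forall>\<tau>. \<tau> permutes {..<n} \<longrightarrow> assign_cost n us Z \<sigma> \<le> assign_cost n us Z \<tau>)"

end

theory Submission
  imports Defs
begin

text \<open>
  Let \<open>A\<close> be the closed halfspace \<open>{j. \<langle>v, u\<^sub>j - u\<^sub>i\<rangle> \<ge> 0}\<close>; since \<open>v\<close> attains the
  Tukey depth, \<open>|A| < l\<close>. The \<open>l\<close> far targets near \<open>k v\<close> therefore cannot all be
  matched with points of \<open>A\<close>: some \<open>u\<^sub>j\<close> with \<open>\<langle>v, u\<^sub>i - u\<^sub>j\<rangle> > 0\<close> is sent near \<open>k v\<close>.
  If \<open>u\<^sub>i\<close> were sent to one of the fixed points \<open>X\<^sub>a\<close>, exchanging the two targets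
  (cyclical monotonicity of optimal matchings) would give
  \<open>k \<langle>v, u\<^sub>i - u\<^sub>j\<rangle> \<le> (\<parallel>X\<^sub>a\<parallel> + 1) \<parallel>u\<^sub>i - u\<^sub>j\<parallel>\<close>, which fails for large \<open>k\<close>.
  Hence \<open>u\<^sub>i\<close> is eventually sent near \<open>k v\<close>.
\<close>

lemma tukey_depth_eq_tukey_frac:
  assumes "v \<in> sphere 0 1" and "\<forall>w\<in>sphere 0 1. tukey_frac n us u v \<le> tukey_frac n us u w"
  shows "tukey_depth n us u = tukey_frac n us u v"
  unfolding tukey_depth_def using assms by (intro cInf_eq_minimum) auto

lemma optimal_assignment_permutes:
  "optimal_assignment n us Z s \<Longrightarrow> s permutes {..<n}"
  by (simp add: optimal_assignment_def)

lemma optimal_assignment_swap_cost: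
  assumes opt: "optimal_assignment n us Z s" and i: "i < n" and j: "j < n" and ij: "i \<noteq> j"
  shows "(norm (Z (s i) - us i))\<^sup>2 + (norm (Z (s j) - us j))\<^sup>2
     \<le> (norm (Z (s j) - us i))\<^sup>2 + (norm (Z (s i) - us j))\<^sup>2"
proof -
  define t where "t = s \<circ> Transposition.transpose i j"
  have "t permutes {..<n}"
    unfolding t_def using i j
    by (intro permutes_compose[OF permutes_swap_id optimal_assignment_permutes[OF opt]]) auto
  then have "assign_cost n us Z s \<le> assign_cost n us Z t"
    using opt by (simp add: optimal_assignment_def)
  then have "0 \<le> (\<Sum>x<n. (norm (Z (t x) - us x))\<^sup>2 - (norm (Z (s x) - us x))\<^sup>2)"
    using i by (simp add: assign_cost_def divide_le_cancel sum_subtractf)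
  also have "\<dots> = (\<Sum>x\<in>{i, j}. (norm (Z (t x) - us x))\<^sup>2 - (norm (Z (s x) - us x))\<^sup>2)"
    using i j by (intro sum.mono_neutral_right) (auto simp: t_def Transposition.transpose_def)
  finally show ?thesis
    using ij by (simp add: t_def Transposition.transpose_def)
qed

lemma optimal_assignment_monotone:
  assumes opt: "optimal_assignment n us Z s" and "i < n" "j < n"
  shows "Z (s j) \<bullet> (us i - us j) \<le> Z (s i) \<bullet> (us i - us j)"
proof (cases "i = j")
  case False
  with optimal_assignment_swap_cost[OF assms False] show ?thesis
    by (simp add: power2_norm_eq_inner inner_diff_left inner_diff_right inner_commute algebra_simps)
qed simp

lemma permutes_hits_outside:
  assumes "\<sigma> permutes S" "B \<subseteq> S" "finite A" "card A < card B"
  shows "\<exists>j\<in>S - A. \<sigma> j \<in> B"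
proof -
  have "\<not> B \<subseteq> \<sigma> ` A"
    using assms(3,4) card_mono[of "\<sigma> ` A" B] card_image_le[of A \<sigma>] by auto
  then obtain b where "b \<in> B" "b \<notin> \<sigma> ` A" by blast
  moreover have "b \<in> \<sigma> ` S"
    using \<open>b \<in> B\<close> assms(1,2) permutes_image by blast
  ultimately show ?thesis by blast
qed

lemma inner_bound_of_near_multiple:
  fixes z x v d :: "'a::real_inner"
  assumes "norm (z - c *\<^sub>R v) \<le> 1" and "z \<bullet> d \<le> x \<bullet> d"
  shows "c * (v \<bullet> d) \<le> (norm x + 1) * norm d"
proof -
  have "c * (v \<bullet> d) = z \<bullet> d - (z - c *\<^sub>R v) \<bullet> d"
    by (simp add: inner_diff_left)
  also have "\<dots> \<le> x \<bullet> d + norm (z - c *\<^sub>R v) * norm d"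
    using assms(2) Cauchy_Schwarz_ineq2[of "z - c *\<^sub>R v" d] by linarith
  also have "\<dots> \<le> norm x * norm d + norm d"
    using norm_cauchy_schwarz[of x d] mult_right_mono[OF assms(1) norm_ge_zero[of d]] by simp
  finally show ?thesis by (simp add: algebra_simps)
qed

lemma optimal_assignment_far_targets:
  assumes opt: "optimal_assignment n us Z s" and i: "i < n"
    and B: "B \<subseteq> {..<n}" "\<forall>b\<in>B. norm (Z b - c *\<^sub>R v) \<le> 1"
    and card: "card {j\<in>{..<n}. 0 \<le> v \<bullet> (us j - us i)} < card B"
    and "s i \<notin> B"
  shows "\<exists>j<n. 0 < v \<bullet> (us i - us j) \<and> c * (v \<bullet> (us i - us j)) \<le> (norm (Z (s i)) + 1) * norm (us i - us j)"
proof -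
  obtain j where j: "j < n" "\<not> 0 \<le> v \<bullet> (us j - us i)" "s j \<in> B"
    using permutes_hits_outside[OF optimal_assignment_permutes[OF opt] B(1) _ card] by auto
  have "c * (v \<bullet> (us i - us j)) \<le> (norm (Z (s i)) + 1) * norm (us i - us j)"
    using B(2) j(3) optimal_assignment_monotone[OF opt i j(1)] by (intro inner_bound_of_near_multiple) auto
  moreover have "0 < v \<bullet> (us i - us j)"
    using j(2) by (simp add: inner_diff_right)
  ultimately show ?thesis using j(1) by blast
qed

lemma eventually_all_mult_gt:
  assumes "finite G" "\<forall>j\<in>G. 0 < \<delta> j"
  shows "eventually (\<lambda>k. \<forall>j\<in>G. C j < real k * \<delta> j) sequentially"
proof (intro eventually_ball_finite[OF assms(1)] ballI)
  fix j assume "j \<in> G"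
  have "filterlim (\<lambda>k. \<delta> j * real k) at_top sequentially"
    using assms(2) \<open>j \<in> G\<close> by (intro filterlim_tendsto_pos_mult_at_top[OF tendsto_const _ filterlim_real_sequentially]) auto
  then show "eventually (\<lambda>k. C j < real k * \<delta> j) sequentially"
    by (simp add: filterlim_at_top_dense mult.commute)
qed

lemma eventually_optimal_assignment_in_far_targets:
  assumes opt: "\<forall>k. optimal_assignment n us (Z k) (s k)" and i: "i < n"
    and B: "B \<subseteq> {..<n}" "\<forall>k. \<forall>b\<in>B. norm (Z k b - real k *\<^sub>R v) \<le> 1"
    and bounded: "\<forall>k. \<forall>b\<in>{..<n} - B. norm (Z k b) \<le> R"
    and card: "card {j\<in>{..<n}. 0 \<le> v \<bullet> (us j - us i)} < card B"
  shows "eventually (\<lambda>k. s k i \<in> B) sequentially"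
proof -
  have "eventually (\<lambda>k. \<forall>j\<in>{j. j < n \<and> 0 < v \<bullet> (us i - us j)}.
      (R + 1) * norm (us i - us j) < real k * (v \<bullet> (us i - us j))) sequentially"
    by (rule eventually_all_mult_gt) auto
  then show ?thesis
  proof (rule eventually_mono)
    fix k assume large: "\<forall>j\<in>{j. j < n \<and> 0 < v \<bullet> (us i - us j)}.
      (R + 1) * norm (us i - us j) < real k * (v \<bullet> (us i - us j))"
    show "s k i \<in> B"
    proof (rule ccontr)
      assume not_far: "s k i \<notin> B"
      have "s k i < n"
        using permutes_in_image[OF optimal_assignment_permutes] opt i by blast
      with not_far bounded have norm_le: "norm (Z k (s k i)) \<le> R"
        by blast
      obtain j where j: "j < n" "0 < v \<bullet> (us i - us j)"
        and bounded_j: "real k * (v \<bullet> (us i - us j)) \<le> (norm (Z k (s k i)) + 1) * norm (us i - us j)"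
        using optimal_assignment_far_targets[OF opt[rule_format] i B(1) _ card not_far] B(2) by blast
      have "(norm (Z k (s k i)) + 1) * norm (us i - us j) \<le> (R + 1) * norm (us i - us j)"
        using norm_le by (simp add: mult_right_mono)
      with bounded_j large j show False
        by force
    qed
  qed
qed

lemma filterlim_norm_at_top_of_near_multiple:
  fixes z :: "nat \<Rightarrow> 'a::real_normed_vector"
  assumes "norm v = 1" and "eventually (\<lambda>k. norm (z k - real k *\<^sub>R v) \<le> 1) sequentially"
  shows "filterlim (\<lambda>k. norm (z k)) at_top sequentially"
proof (rule filterlim_at_top_mono[OF _ assms(2)[THEN eventually_mono]])
  show "filterlim (\<lambda>k. - 1 + real k) at_top sequentially"
    by (rule filterlim_tendsto_add_at_top[OF tendsto_const filterlim_real_sequentially])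
next
  fix k assume near: "norm (z k - real k *\<^sub>R v) \<le> 1"
  have "real k = norm (real k *\<^sub>R v)"
    using assms(1) by simp
  also have "\<dots> \<le> norm (z k) + norm (z k - real k *\<^sub>R v)"
    by (metis norm_triangle_sub add.commute norm_minus_commute)
  finally show "- 1 + real k \<le> norm (z k)"
    using near by linarith
qed

theorem mainTheorem9:
  fixes n l i :: nat and X u :: "nat \<Rightarrow> 'a::euclidean_space"
    and v :: 'a and V :: "nat \<Rightarrow> nat \<Rightarrow> 'a" and Z :: "nat \<Rightarrow> nat \<Rightarrow> 'a"
    and \<sigma> :: "nat \<Rightarrow> nat \<Rightarrow> nat"
  assumes X_inj: "inj_on X {..<n}"
    and u_inj: "inj_on u {..<n}"
    and i: "i < n"
    and l: "1 \<le> l" "l \<le> n"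
    and v_sphere: "v \<in> sphere 0 1"
    and v_argmin: "\<forall>w\<in>sphere 0 1. tukey_frac n u (u i) v \<le> tukey_frac n u (u i) w"
    and V_ball: "\<forall>k j. j < l \<longrightarrow> V k j \<in> cball (real k *\<^sub>R v) 1"
    and Z_def: "\<forall>k j. Z k j = (if j < n - l then X j else V k (j - (n - l)))"
    and Z_inj: "\<forall>k. inj_on (Z k) {..<n}"
    and \<sigma>_opt: "\<forall>k. optimal_assignment n u (Z k) (\<sigma> k)"
    and TD: "tukey_depth n u (u i) < real l / real n"
  shows "filterlim (\<lambda>k. norm (Z k (\<sigma> k i))) at_top sequentially"
proof -
  have card: "card {j\<in>{..<n}. 0 \<le> v \<bullet> (u j - u i)} < card {n - l..<n}"
    using TD i l unfolding tukey_depth_eq_tukey_frac[OF v_sphere v_argmin] tukey_frac_def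
    by (simp add: divide_less_cancel)
  have near: "\<forall>k. \<forall>b\<in>{n - l..<n}. norm (Z k b - real k *\<^sub>R v) \<le> 1"
  proof (intro allI ballI)
    fix k b assume b: "b \<in> {n - l..<n}"
    then have "V k (b - (n - l)) \<in> cball (real k *\<^sub>R v) 1"
      using V_ball l by auto
    then show "norm (Z k b - real k *\<^sub>R v) \<le> 1"
      using b Z_def by (simp add: dist_norm norm_minus_commute)
  qed
  have "\<forall>k. \<forall>b\<in>{..<n} - {n - l..<n}. norm (Z k b) \<le> (\<Sum>a<n - l. norm (X a))"
    using Z_def by (auto intro: member_le_sum)
  moreover have "{n - l..<n} \<subseteq> {..<n}"
    by auto
  ultimately have "eventually (\<lambda>k. \<sigma> k i \<in> {n - l..<n}) sequentially"
    using eventually_optimal_assignment_in_far_targets[OF \<sigma>_opt i _ near _ card] by blast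
  then have "eventually (\<lambda>k. norm (Z k (\<sigma> k i) - real k *\<^sub>R v) \<le> 1) sequentially"
    by (rule eventually_mono) (use near in blast)
  then show ?thesis
    using v_sphere by (intro filterlim_norm_at_top_of_near_multiple) auto
qed

end
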